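(* Let $x_0>0$ and $L>0$. There exist a unique $\lambda>0$ and a unique vertically symmetric admissible curve $\gamma=(x,y)$ on $[0,2L]$, parametrized by arc length, such that $\dot y(0)=\dot y(2L)=0$ and $$2+\frac{d^2(H^{-2})}{ds^2}=\lambda\quad\text{on }[0,2L],$$ if and only if $3x_0<L$. In that case $\lambda=\lambda(x_0,L)=\frac{2L}{L+x_0}$ and $\gamma=(x,y)$ is given, with $\sigma=\pi\sqrt{x_0/(L+x_0)}$, $k=L/\sin\sigma$ and $a(s)=\arcsin((s-L)/k)$, by $x(s)=-\frac k2\Big(\frac{\sigma}{\pi+\sigma}\sin\big(\tfrac{\pi+\sigma}{\sigma}a(s)\big)+\frac{\sigma}{\pi-\sigma}\sin\big(\tfrac{\pi-\sigma}{\sigma}a(s)\big)\Big)$, $y(s)=\frac k2\Big(\frac{\sigma}{\pi+\sigma}\cos\big(\tfrac{\pi+\sigma}{\sigma}a(s)\big)+\frac{\sigma}{\pi-\sigma}\cos\big(\tfrac{\pi-\sigma}{\sigma}a(s)\big)\Big)+\frac{\pi x_0}{\sigma\tan\sigma}$ for $s\in[0,2L]$.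
   Context: Notation: $(\xi,\eta)^\perp=(\eta,-\xi)$; for a regular curve $\gamma\in C^2([0,2L],\mathbb R^2)$, curvature $H=\langle\dot\gamma,\ddot\gamma^\perp\rangle/|\dot\gamma|^3$; strictly counterclockwise means $H>0$. A curve $\gamma=(x,y)$ is admissible if $\gamma\in C^\infty([0,2L],\mathbb R^2)$ is regular, strictly counterclockwise, injective, $\gamma(0)=(x_0,0)$, $\gamma(2L)=(-x_0,0)$, $y>0$ on $(0,2L)$. Vertically symmetric means the support is symmetric with respect to the axis $\{x=0\}$. Parametrized by arc length means $|\dot\gamma|\equiv1$. *)

theory Defs
  imports "HOL-Analysis.Analysis"
begin

definition dwithin :: "real \<Rightarrow> real \<Rightarrow> (real \<Rightarrow> real) \<Rightarrow> real \<Rightarrow> real" where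
  "dwithin a b f t = vector_derivative f (at t within {a..b})"

definition hderiv :: "real \<Rightarrow> real \<Rightarrow> nat \<Rightarrow> (real \<Rightarrow> real) \<Rightarrow> real \<Rightarrow> real" where
  "hderiv a b n f = (dwithin a b ^^ n) f"

definition smooth_int :: "real \<Rightarrow> real \<Rightarrow> (real \<Rightarrow> real) \<Rightarrow> bool" where
  "smooth_int a b f \<longleftrightarrow> (\<forall>n. \<forall>t\<in>{a..b}.
      (hderiv a b n f has_vector_derivative hderiv a b (Suc n) f t) (at t within {a..b}))"

definition curvature :: "real \<Rightarrow> real \<Rightarrow> (real \<Rightarrow> real) \<Rightarrow> (real \<Rightarrow> real) \<Rightarrow> real \<Rightarrow> real" where
  "curvature a b x y t =
     (hderiv a b 1 x t * hderiv a b 2 y t - hderiv a b 1 y t * hderiv a b 2 x t)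
     / (sqrt ((hderiv a b 1 x t)\<^sup>2 + (hderiv a b 1 y t)\<^sup>2)) ^ 3"

definition admissible :: "real \<Rightarrow> real \<Rightarrow> (real \<Rightarrow> real) \<Rightarrow> (real \<Rightarrow> real) \<Rightarrow> bool" where
  "admissible x0 L x y \<longleftrightarrow>
     smooth_int 0 (2*L) x \<and> smooth_int 0 (2*L) y \<and>
     (\<forall>t\<in>{0..2*L}. (hderiv 0 (2*L) 1 x t, hderiv 0 (2*L) 1 y t) \<noteq> (0, 0)) \<and>
     (\<forall>t\<in>{0..2*L}. curvature 0 (2*L) x y t > 0) \<and>
     inj_on (\<lambda>t. (x t, y t)) {0..2*L} \<and>
     x 0 = x0 \<and> y 0 = 0 \<and> x (2*L) = - x0 \<and> y (2*L) = 0 \<and>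
     (\<forall>t\<in>{0<..<2*L}. y t > 0)"

definition vert_symmetric :: "real \<Rightarrow> real \<Rightarrow> (real \<Rightarrow> real) \<Rightarrow> (real \<Rightarrow> real) \<Rightarrow> bool" where
  "vert_symmetric a b x y \<longleftrightarrow>
     (\<lambda>p. (- fst p, snd p)) ` ((\<lambda>t. (x t, y t)) ` {a..b}) = (\<lambda>t. (x t, y t)) ` {a..b}"

definition arclength_param :: "real \<Rightarrow> real \<Rightarrow> (real \<Rightarrow> real) \<Rightarrow> (real \<Rightarrow> real) \<Rightarrow> bool" where
  "arclength_param a b x y \<longleftrightarrow>
     (\<forall>t\<in>{a..b}. (hderiv a b 1 x t)\<^sup>2 + (hderiv a b 1 y t)\<^sup>2 = 1)"

definition solves :: "real \<Rightarrow> real \<Rightarrow> real \<Rightarrow> (real \<Rightarrow> real) \<Rightarrow> (real \<Rightarrow> real) \<Rightarrow> bool" where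
  "solves x0 L lam x y \<longleftrightarrow>
     lam > 0 \<and> admissible x0 L x y \<and> vert_symmetric 0 (2*L) x y \<and>
     arclength_param 0 (2*L) x y \<and>
     hderiv 0 (2*L) 1 y 0 = 0 \<and> hderiv 0 (2*L) 1 y (2*L) = 0 \<and>
     (\<forall>s\<in>{0..2*L}.
        2 + hderiv 0 (2*L) 2 (\<lambda>t. inverse ((curvature 0 (2*L) x y t)\<^sup>2)) s = lam)"

definition sol_sigma :: "real \<Rightarrow> real \<Rightarrow> real" where
  "sol_sigma x0 L = pi * sqrt (x0 / (L + x0))"

definition sol_k :: "real \<Rightarrow> real \<Rightarrow> real" where
  "sol_k x0 L = L / sin (sol_sigma x0 L)"

definition sol_a :: "real \<Rightarrow> real \<Rightarrow> real \<Rightarrow> real" where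
  "sol_a x0 L s = arcsin ((s - L) / sol_k x0 L)"

definition sol_x :: "real \<Rightarrow> real \<Rightarrow> real \<Rightarrow> real" where
  "sol_x x0 L s = (let \<sigma> = sol_sigma x0 L; k = sol_k x0 L; a = sol_a x0 L s in
     - (k / 2) * (\<sigma> / (pi + \<sigma>) * sin ((pi + \<sigma>) / \<sigma> * a)
                 + \<sigma> / (pi - \<sigma>) * sin ((pi - \<sigma>) / \<sigma> * a)))"

definition sol_y :: "real \<Rightarrow> real \<Rightarrow> real \<Rightarrow> real" where
  "sol_y x0 L s = (let \<sigma> = sol_sigma x0 L; k = sol_k x0 L; a = sol_a x0 L s in
     (k / 2) * (\<sigma> / (pi + \<sigma>) * cos ((pi + \<sigma>) / \<sigma> * a)
               + \<sigma> / (pi - \<sigma>) * cos ((pi - \<sigma>) / \<sigma> * a))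
     + pi * x0 / (\<sigma> * tan \<sigma>))"

end

theory Submission
  imports Defs "HOL-Complex_Analysis.Complex_Analysis"
begin

text \<open>
  For a curve parametrised by arc length the equation says that the square of the radius of
  curvature \<open>\<rho> = 1/H\<close> has constant second derivative \<open>\<lambda> - 2\<close>. With \<open>Q = \<rho>\<rho>'\<close>, the Frenet
  equations make \<open>y'Q - x'\<rho> - \<lambda>y/2\<close> and \<open>y'\<rho> + x'Q - \<lambda>x/2\<close> constant. At both ends the tangent
  is \<open>(1,0)\<close> (otherwise \<open>y\<close> would become negative), so comparing endpoint values yields
  \<open>\<rho>(2L) = \<rho>(0)\<close> and \<open>\<lambda> = 2L/(L+x\<^sub>0)\<close>. Hence \<open>\<rho>\<^sup>2 = c(k\<^sup>2 - (s-L)\<^sup>2)\<close> with \<open>c = x\<^sub>0/(L+x\<^sub>0)\<close>,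
  and the tangent angle is \<open>\<omega> arcsin((s-L)/k)\<close> up to a constant, \<open>\<omega> = 1/\<surd>c\<close>. The horizontal
  tangents at the ends force \<open>\<omega>\<sigma> \<in> \<pi>\<int>\<close> for \<open>\<sigma> = arcsin(L/k)\<close>; a full turn \<open>\<omega>\<sigma> \<ge> 2\<pi>\<close> would
  push the curve below the axis, so \<open>\<omega>\<sigma> = \<pi>\<close>, i.e. \<open>\<sigma> = \<pi>\<surd>c < \<pi>/2\<close>, which is \<open>3x\<^sub>0 < L\<close>.
  Integrating the tangent gives the explicit formulas; conversely, they define a solution, smooth
  because they extend holomorphically.
\<close>

section \<open>Derivatives on a closed interval\<close>

lemma hderiv_0 [simp]: "hderiv a b 0 f = f"
  by (simp add: hderiv_def)

lemma hderiv_Suc: "hderiv a b (Suc n) f = dwithin a b (hderiv a b n f)"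
  by (simp add: hderiv_def)

lemma hderiv_1: "hderiv a b 1 f = dwithin a b f"
  by (simp add: hderiv_def)

lemma hderiv_2: "hderiv a b 2 f = dwithin a b (hderiv a b 1 f)"
  by (simp add: hderiv_def numeral_2_eq_2)

lemma DERIV_within_cong_on:
  assumes "t \<in> S" "\<And>s. s \<in> S \<Longrightarrow> f s = g s"
    and "(g has_real_derivative D) (at t within S)"
  shows "(f has_real_derivative D) (at t within S)"
  using has_vector_derivative_transform[of t S f g D] assms
  by (simp add: has_real_derivative_iff_has_vector_derivative)

lemma dwithin_eqI:
  assumes "a < b" "t \<in> {a..b}" "\<And>s. s \<in> {a..b} \<Longrightarrow> f s = g s"
    and "(g has_real_derivative D) (at t within {a..b})"
  shows "dwithin a b f t = D"
  using DERIV_within_cong_on[OF assms(2-4)] vector_derivative_within_closed_interval[OF assms(1,2)]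
  unfolding dwithin_def has_real_derivative_iff_has_vector_derivative by blast

lemma smooth_int_DERIV:
  assumes "smooth_int a b f" "t \<in> {a..b}"
  shows "(hderiv a b n f has_real_derivative hderiv a b (Suc n) f t) (at t within {a..b})"
  using assms unfolding smooth_int_def has_real_derivative_iff_has_vector_derivative by blast

lemma DERIV_within_const_on_zero:
  assumes "a < b" "t \<in> {a..b}" "(f has_real_derivative D) (at t within {a..b})"
    and "\<And>s. s \<in> {a..b} \<Longrightarrow> f s = c"
  shows "D = 0"
proof -
  have "((\<lambda>s. c) has_real_derivative 0) (at t within {a..b})"
    by simp
  from dwithin_eqI[of a b t f "\<lambda>s. c", OF assms(1,2) assms(4) this]
    dwithin_eqI[OF assms(1,2) _ assms(3)]
  show ?thesis
    by simp
qed

lemma DERIV_within_zero_const: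
  fixes f :: "real \<Rightarrow> real"
  assumes "\<And>t. t \<in> {a..b} \<Longrightarrow> (f has_real_derivative 0) (at t within {a..b})"
    and "s \<in> {a..b}" "r \<in> {a..b}"
  shows "f s = f r"
proof -
  obtain c where "\<forall>t\<in>{a..b}. f t = c"
    using has_field_derivative_zero_constant[of "{a..b}" f] assms(1) by auto
  then show ?thesis
    using assms(2,3) by auto
qed

lemma DERIV_within_diff_const:
  fixes f g :: "real \<Rightarrow> real"
  assumes "\<And>t. t \<in> {a..b} \<Longrightarrow> (f has_real_derivative D t) (at t within {a..b})"
    and "\<And>t. t \<in> {a..b} \<Longrightarrow> (g has_real_derivative D t) (at t within {a..b})"
    and "s \<in> {a..b}" "r \<in> {a..b}"
  shows "f s - g s = f r - g r"
  by (rule DERIV_within_zero_const[of a b "\<lambda>t. f t - g t", OF _ assms(3,4)])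
    (use assms(1,2) in \<open>auto intro!: derivative_eq_intros\<close>)

lemma DERIV_within_pos_imp_less:
  fixes f :: "real \<Rightarrow> real"
  assumes "\<And>t. t \<in> {a..b} \<Longrightarrow> (f has_real_derivative f' t) (at t within {a..b})"
    and "a \<le> u" "u < v" "v \<le> b" "\<And>t. u < t \<Longrightarrow> t < v \<Longrightarrow> f' t > 0"
  shows "f u < f v"
proof (rule DERIV_pos_imp_increasing_open[OF \<open>u < v\<close>])
  fix t assume "u < t" "t < v"
  then have "t \<in> {a..b}" "at t within {a..b} = at t"
    using assms(2,4) by (auto intro!: at_within_interior)
  then show "\<exists>D. (f has_real_derivative D) (at t) \<and> 0 < D"
    using assms(1,5) \<open>u < t\<close> \<open>t < v\<close> by metis
next
  have "continuous_on {a..b} f"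
    using assms(1) by (rule DERIV_continuous_on)
  then show "continuous_on {u..v} f"
    by (rule continuous_on_subset) (use assms in auto)
qed

lemma DERIV_within_neg_imp_greater:
  fixes f :: "real \<Rightarrow> real"
  assumes "\<And>t. t \<in> {a..b} \<Longrightarrow> (f has_real_derivative f' t) (at t within {a..b})"
    and "a \<le> u" "u < v" "v \<le> b" "\<And>t. u < t \<Longrightarrow> t < v \<Longrightarrow> f' t < 0"
  shows "f u > f v"
  using DERIV_within_pos_imp_less[of a b "\<lambda>t. - f t" "\<lambda>t. - f' t" u v] assms
  by (auto intro!: derivative_eq_intros)

lemma negative_near_left_endpoint:
  fixes f f' :: "real \<Rightarrow> real"
  assumes "a < b" "\<And>t. t \<in> {a..b} \<Longrightarrow> (f has_real_derivative f' t) (at t within {a..b})"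
    and "(f' has_real_derivative D) (at a within {a..b})" "D < 0" "f a = 0" "f' a = 0"
  shows "\<exists>t\<in>{a<..<b}. f t < 0"
proof -
  obtain d where "d > 0" and d: "\<And>h. h > 0 \<Longrightarrow> a + h \<in> {a..b} \<Longrightarrow> h < d \<Longrightarrow> f' (a + h) < f' a"
    using has_real_derivative_neg_dec_right[OF assms(3,4)] by blast
  define e where "e = min d (b - a) / 2"
  have e: "0 < e" "e < d" "a + e < b"
    using \<open>d > 0\<close> assms(1) unfolding e_def by (auto simp: min_def field_simps)
  have "f' t < 0" if "a < t" "t < a + e" for t
    using d[of "t - a"] that e assms(6) by auto
  then have "f (a + e) < f a"
    using DERIV_within_neg_imp_greater[OF assms(2), of a "a + e"] e by auto
  then show ?thesis
    using e assms(5) by (intro bexI[of _ "a + e"]) auto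
qed

lemma negative_near_right_endpoint:
  fixes f f' :: "real \<Rightarrow> real"
  assumes "a < b" "\<And>t. t \<in> {a..b} \<Longrightarrow> (f has_real_derivative f' t) (at t within {a..b})"
    and "(f' has_real_derivative D) (at b within {a..b})" "D < 0" "f b = 0" "f' b = 0"
  shows "\<exists>t\<in>{a<..<b}. f t < 0"
proof -
  obtain d where "d > 0" and d: "\<And>h. h > 0 \<Longrightarrow> b - h \<in> {a..b} \<Longrightarrow> h < d \<Longrightarrow> f' b < f' (b - h)"
    using has_real_derivative_neg_dec_left[OF assms(3,4)] by blast
  define e where "e = min d (b - a) / 2"
  have e: "0 < e" "e < d" "a < b - e"
    using \<open>d > 0\<close> assms(1) unfolding e_def by (auto simp: min_def field_simps)
  have "f' t > 0" if "b - e < t" "t < b" for t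
    using d[of "b - t"] that e assms(6) by auto
  then have "f (b - e) < f b"
    using DERIV_within_pos_imp_less[OF assms(2), of "b - e" b] e by auto
  then show ?thesis
    using e assms(5) by (intro bexI[of _ "b - e"]) auto
qed

lemma hderiv_2_parabola:
  assumes "a < b" "t \<in> {a..b}" "\<And>s. s \<in> {a..b} \<Longrightarrow> f s = p - q * (s - r)\<^sup>2"
  shows "hderiv a b 2 f t = - 2 * q"
proof -
  have "hderiv a b 1 f s = - 2 * q * (s - r)" if "s \<in> {a..b}" for s
    unfolding hderiv_1 by (rule dwithin_eqI[OF assms(1) that assms(3)]) (auto intro!: derivative_eq_intros)
  then show ?thesis
    unfolding hderiv_2 by (rule dwithin_eqI[OF assms(1,2)]) (auto intro!: derivative_eq_intros)
qed

lemma smooth_int_Re_holomorphic: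
  assumes "F holomorphic_on S" "open S" "\<And>t. t \<in> {a..b} \<Longrightarrow> complex_of_real t \<in> S"
    and "a < b" "\<And>t. t \<in> {a..b} \<Longrightarrow> f t = Re (F (of_real t))"
  shows "smooth_int a b f"
proof -
  define G where "G n t = Re ((deriv ^^ n) F (of_real t))" for n t
  have G_DERIV: "(G n has_real_derivative G (Suc n) t) (at t within {a..b})"
    if "t \<in> {a..b}" for n t
  proof -
    have "((deriv ^^ n) F has_field_derivative (deriv ^^ Suc n) F (of_real t)) (at (of_real t))"
      using holomorphic_higher_deriv[OF assms(1,2)] assms(2,3) that holomorphic_derivI by fastforce
    then have "((\<lambda>s. (deriv ^^ n) F (of_real s)) has_vector_derivative (deriv ^^ Suc n) F (of_real t))
        (at t within {a..b})"
      by (simp add: has_vector_derivative_real_field)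
    from bounded_linear.has_vector_derivative[OF bounded_linear_Re this]
    show ?thesis
      by (simp add: G_def[abs_def] has_real_derivative_iff_has_vector_derivative)
  qed
  have hderiv_G: "hderiv a b n f t = G n t" if "t \<in> {a..b}" for n t
    using that
  proof (induction n arbitrary: t)
    case 0
    then show ?case
      using assms(5) by (simp add: G_def)
  next
    case (Suc n)
    then show ?case
      unfolding hderiv_Suc by (intro dwithin_eqI[OF assms(4) _ _ G_DERIV])
  qed
  show ?thesis
    unfolding smooth_int_def has_real_derivative_iff_has_vector_derivative[symmetric]
    using DERIV_within_cong_on G_DERIV hderiv_G by metis
qed

section \<open>Plane curves\<close>

lemma curvature_tangent_angle:
  assumes "a < b" "t \<in> {a..b}"
    and x: "\<And>s. s \<in> {a..b} \<Longrightarrow> (x has_real_derivative cos (\<theta> s)) (at s within {a..b})"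
    and y: "\<And>s. s \<in> {a..b} \<Longrightarrow> (y has_real_derivative sin (\<theta> s)) (at s within {a..b})"
    and \<theta>: "\<And>s. s \<in> {a..b} \<Longrightarrow> (\<theta> has_real_derivative \<kappa> s) (at s within {a..b})"
  shows "hderiv a b 1 x t = cos (\<theta> t)" "hderiv a b 1 y t = sin (\<theta> t)"
    and "curvature a b x y t = \<kappa> t"
proof -
  have x1: "hderiv a b 1 x s = cos (\<theta> s)" and y1: "hderiv a b 1 y s = sin (\<theta> s)"
    if "s \<in> {a..b}" for s
    unfolding hderiv_1 using dwithin_eqI[OF assms(1) that _ x[OF that]]
      dwithin_eqI[OF assms(1) that _ y[OF that]] by simp_all
  then show "hderiv a b 1 x t = cos (\<theta> t)" "hderiv a b 1 y t = sin (\<theta> t)"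
    using assms(2) by simp_all
  have "hderiv a b 2 x t = - sin (\<theta> t) * \<kappa> t"
    unfolding hderiv_2 by (rule dwithin_eqI[OF assms(1,2) x1]) (auto intro!: derivative_eq_intros \<theta> assms(2))
  moreover have "hderiv a b 2 y t = cos (\<theta> t) * \<kappa> t"
    unfolding hderiv_2 by (rule dwithin_eqI[OF assms(1,2) y1]) (auto intro!: derivative_eq_intros \<theta> assms(2))
  ultimately show "curvature a b x y t = \<kappa> t"
    unfolding curvature_def x1[OF assms(2)] y1[OF assms(2)]
    by (simp add: algebra_simps) (metis distrib_left mult_1_right sin_cos_squared_add3)
qed

lemma tangent_rotation:
  fixes u v \<theta> \<kappa> :: "real \<Rightarrow> real"
  assumes u: "\<And>s. s \<in> {a..b} \<Longrightarrow> (u has_real_derivative - \<kappa> s * v s) (at s within {a..b})"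
    and v: "\<And>s. s \<in> {a..b} \<Longrightarrow> (v has_real_derivative \<kappa> s * u s) (at s within {a..b})"
    and \<theta>: "\<And>s. s \<in> {a..b} \<Longrightarrow> (\<theta> has_real_derivative \<kappa> s) (at s within {a..b})"
    and "t \<in> {a..b}"
  shows "u t = u a * cos (\<theta> t - \<theta> a) - v a * sin (\<theta> t - \<theta> a)"
    and "v t = u a * sin (\<theta> t - \<theta> a) + v a * cos (\<theta> t - \<theta> a)"
proof -
  define C where "C s = u s * cos (\<theta> s) + v s * sin (\<theta> s)" for s
  define S where "S s = v s * cos (\<theta> s) - u s * sin (\<theta> s)" for s
  have "a \<in> {a..b}"
    using assms(4) by auto
  have "(C has_real_derivative 0) (at s within {a..b})" "(S has_real_derivative 0) (at s within {a..b})"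
    if "s \<in> {a..b}" for s
    unfolding C_def[abs_def] S_def[abs_def]
    by (rule DERIV_cong, (rule derivative_intros u v \<theta> that)+, simp add: algebra_simps)+
  then have CS: "C t = C a" "S t = S a"
    using DERIV_within_zero_const assms(4) \<open>a \<in> {a..b}\<close> by metis+
  have "u t = C t * cos (\<theta> t) - S t * sin (\<theta> t)" "v t = C t * sin (\<theta> t) + S t * cos (\<theta> t)"
    by (simp_all add: C_def S_def algebra_simps) (metis distrib_left mult_1_right sin_cos_squared_add3)+
  then show "u t = u a * cos (\<theta> t - \<theta> a) - v a * sin (\<theta> t - \<theta> a)"
    "v t = u a * sin (\<theta> t - \<theta> a) + v a * cos (\<theta> t - \<theta> a)"
    unfolding CS by (simp_all add: C_def S_def cos_diff sin_diff algebra_simps)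
qed

lemma vert_symmetric_if_reflection:
  assumes "\<And>t. t \<in> {a..b} \<Longrightarrow> x (a + b - t) = - x t"
    and "\<And>t. t \<in> {a..b} \<Longrightarrow> y (a + b - t) = y t"
  shows "vert_symmetric a b x y"
proof -
  have "(\<lambda>p. (- fst p, snd p)) ` (\<lambda>t. (x t, y t)) ` {a..b}
      = (\<lambda>t. (x t, y t)) ` (\<lambda>t. a + b - t) ` {a..b}"
    unfolding image_image by (rule image_cong) (simp_all add: assms)
  also have "(\<lambda>t. a + b - t) ` {a..b} = {a..b}"
    by (auto simp: image_iff intro!: bexI[of _ "a + b - _"])
  finally show ?thesis
    unfolding vert_symmetric_def .
qed

section \<open>The arcsine parametrisation\<close>

definition arcsin_param :: "real \<Rightarrow> real \<Rightarrow> real \<Rightarrow> real" where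
  "arcsin_param k L t = arcsin ((t - L) / k)"

text \<open>
  Along \<open>a = arcsin_param k L t\<close> one has \<open>dt = k cos a da\<close>, and \<open>arc_x k w\<close>, \<open>arc_y k w\<close> have
  derivatives \<open>k cos(wa) cos a\<close>, \<open>k sin(wa) cos a\<close>: they integrate the unit vector at angle \<open>wa\<close>.
\<close>

definition arc_x :: "real \<Rightarrow> real \<Rightarrow> real \<Rightarrow> real" where
  "arc_x k w a = k / 2 * (sin ((w + 1) * a) / (w + 1) + sin ((w - 1) * a) / (w - 1))"

definition arc_y :: "real \<Rightarrow> real \<Rightarrow> real \<Rightarrow> real" where
  "arc_y k w a = - k / 2 * (cos ((w + 1) * a) / (w + 1) + cos ((w - 1) * a) / (w - 1))"

lemma arcsin_param_bounded:
  fixes k t L :: real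
  assumes "k > 0" "\<bar>t - L\<bar> \<le> k"
  shows "-1 \<le> (t - L) / k" "(t - L) / k \<le> 1"
  using assms by (auto simp: field_simps)

lemma arcsin_param_radicand_pos:
  fixes k t L :: real
  assumes "\<bar>t - L\<bar> < k"
  shows "0 < k\<^sup>2 - (t - L)\<^sup>2"
proof -
  have "\<bar>t - L\<bar>\<^sup>2 < k\<^sup>2"
    using assms by (intro power_strict_mono) auto
  then show ?thesis
    by simp
qed

lemma cos_arcsin_param:
  fixes k t L :: real
  assumes "k > 0" "\<bar>t - L\<bar> \<le> k"
  shows "k * cos (arcsin_param k L t) = sqrt (k\<^sup>2 - (t - L)\<^sup>2)"
proof -
  have "k * cos (arcsin_param k L t) = sqrt (k\<^sup>2) * sqrt (1 - ((t - L) / k)\<^sup>2)"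
    using assms arcsin_param_bounded[OF assms] by (simp add: arcsin_param_def cos_arcsin)
  also have "\<dots> = sqrt (k\<^sup>2 - (t - L)\<^sup>2)"
    unfolding real_sqrt_mult[symmetric] using assms(1) by (simp add: field_simps)
  finally show ?thesis .
qed

lemma arcsin_param_DERIV:
  fixes k t L :: real
  assumes "k > 0" "\<bar>t - L\<bar> < k"
  shows "(arcsin_param k L has_real_derivative 1 / (k * cos (arcsin_param k L t))) (at t)"
proof -
  have "-1 < (t - L) / k" "(t - L) / k < 1"
    using assms by (auto simp: field_simps)
  then have "(arcsin_param k L has_real_derivative inverse (sqrt (1 - ((t - L) / k)\<^sup>2)) * (1 / k)) (at t)"
    unfolding arcsin_param_def[abs_def]
    by (intro DERIV_chain2[OF DERIV_arcsin]) (use assms in \<open>auto intro!: derivative_eq_intros\<close>)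
  moreover have "cos (arcsin_param k L t) = sqrt (1 - ((t - L) / k)\<^sup>2)"
    using arcsin_param_bounded[of k t L] assms by (simp add: arcsin_param_def cos_arcsin)
  ultimately show ?thesis
    by (simp add: inverse_eq_divide mult.commute)
qed

lemma arcsin_param_reflect:
  fixes k t L :: real
  assumes "k > 0" "\<bar>t - L\<bar> \<le> k"
  shows "arcsin_param k L (2 * L - t) = - arcsin_param k L t"
proof -
  have "(2 * L - t - L) / k = - ((t - L) / k)"
    by (simp add: minus_divide_left)
  then show ?thesis
    using arcsin_param_bounded[OF assms] by (simp add: arcsin_param_def arcsin_minus)
qed

lemma arcsin_param_less_iff:
  fixes k s t L :: real
  assumes "k > 0" "\<bar>s - L\<bar> \<le> k" "\<bar>t - L\<bar> \<le> k"
  shows "arcsin_param k L s < arcsin_param k L t \<longleftrightarrow> s < t"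
proof -
  have "arcsin_param k L s < arcsin_param k L t \<longleftrightarrow> (s - L) / k < (t - L) / k"
    unfolding arcsin_param_def using arcsin_param_bounded assms
    by (intro arcsin_less_mono) (auto simp: abs_le_iff)
  also have "\<dots> \<longleftrightarrow> s < t"
    using assms(1) by (simp add: divide_less_cancel)
  finally show ?thesis .
qed

lemma arc_x_DERIV:
  fixes k w a :: real
  assumes "w \<noteq> 1" "w \<noteq> -1"
  shows "(arc_x k w has_real_derivative k * cos (w * a) * cos a) (at a)"
proof -
  have "w + 1 \<noteq> 0" "w - 1 \<noteq> 0"
    using assms by auto
  then have "(arc_x k w has_real_derivative k / 2 * (cos ((w + 1) * a) + cos ((w - 1) * a))) (at a)"
    unfolding arc_x_def[abs_def] by (auto intro!: derivative_eq_intros)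
  then show ?thesis
    by (simp add: distrib_right left_diff_distrib cos_add cos_diff) (simp add: mult_ac)
qed

lemma arc_y_DERIV:
  fixes k w a :: real
  assumes "w \<noteq> 1" "w \<noteq> -1"
  shows "(arc_y k w has_real_derivative k * sin (w * a) * cos a) (at a)"
proof -
  have "w + 1 \<noteq> 0" "w - 1 \<noteq> 0"
    using assms by auto
  then have "(arc_y k w has_real_derivative k / 2 * (sin ((w + 1) * a) + sin ((w - 1) * a))) (at a)"
    unfolding arc_y_def[abs_def] by (auto intro!: derivative_eq_intros, simp add: algebra_simps)
  then show ?thesis
    by (simp add: distrib_right left_diff_distrib sin_add sin_diff) (simp add: mult_ac)
qed

lemma cos_arcsin_param_pos:
  fixes k t L :: real
  assumes "k > 0" "\<bar>t - L\<bar> < k"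
  shows "cos (arcsin_param k L t) > 0"
proof -
  have "-1 < (t - L) / k" "(t - L) / k < 1"
    using assms by (auto simp: field_simps)
  then show ?thesis
    unfolding arcsin_param_def using arcsin_lt_bounded cos_gt_zero_pi by blast
qed

lemma arc_x_arcsin_param_DERIV:
  fixes k w t L :: real
  assumes "k > 0" "\<bar>t - L\<bar> < k" "w \<noteq> 1" "w \<noteq> -1"
  shows "((\<lambda>t. arc_x k w (arcsin_param k L t)) has_real_derivative cos (w * arcsin_param k L t)) (at t)"
  using DERIV_chain2[OF arc_x_DERIV[of w k, OF assms(3,4)] arcsin_param_DERIV[OF assms(1,2)]]
    cos_arcsin_param_pos[OF assms(1,2)] assms(1) by simp

lemma arc_y_arcsin_param_DERIV:
  fixes k w t L :: real
  assumes "k > 0" "\<bar>t - L\<bar> < k" "w \<noteq> 1" "w \<noteq> -1"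
  shows "((\<lambda>t. arc_y k w (arcsin_param k L t)) has_real_derivative sin (w * arcsin_param k L t)) (at t)"
  using DERIV_chain2[OF arc_y_DERIV[of w k, OF assms(3,4)] arcsin_param_DERIV[OF assms(1,2)]]
    cos_arcsin_param_pos[OF assms(1,2)] assms(1) by simp

lemma smooth_int_compose_arcsin_param:
  fixes F :: "complex \<Rightarrow> complex" and f :: "real \<Rightarrow> real"
  assumes "L - k < a" "a < b" "b < L + k" "F holomorphic_on UNIV"
    and "\<And>r. f r = Re (F (of_real r))"
  shows "smooth_int a b (\<lambda>t. f (arcsin_param k L t))"
proof -
  define S where "S = {z. Re z < L + k} \<inter> {z. L - k < Re z}"
  define A where "A z = Arcsin ((z - of_real L) / of_real k)" for z
  have "k > 0"
    using assms(1-3) by linarith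
  have "open S"
    unfolding S_def by (intro open_Int open_halfspace_Re_lt open_halfspace_Re_gt)
  have "(\<lambda>z. (z - of_real L) / of_real k) holomorphic_on S"
    using \<open>k > 0\<close> by (intro holomorphic_intros) auto
  moreover have "Arcsin holomorphic_on {w. Im w = 0 \<longrightarrow> \<bar>Re w\<bar> < 1}"
    by (rule holomorphic_on_Arcsin) auto
  moreover have "(\<lambda>z. (z - of_real L) / of_real k) ` S \<subseteq> {w. Im w = 0 \<longrightarrow> \<bar>Re w\<bar> < 1}"
    using \<open>k > 0\<close> by (auto simp: S_def Re_divide_of_real abs_less_iff field_simps)
  ultimately have "Arcsin \<circ> (\<lambda>z. (z - of_real L) / of_real k) holomorphic_on S"
    by (rule holomorphic_on_compose_gen)
  then have "A holomorphic_on S"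
    by (simp add: A_def[abs_def] o_def)
  then have "(\<lambda>z. F (A z)) holomorphic_on S"
    using holomorphic_on_compose_gen[of A S F UNIV] assms(4) by (simp add: o_def)
  then show ?thesis
  proof (rule smooth_int_Re_holomorphic[OF _ \<open>open S\<close> _ assms(2)])
    fix t assume t: "t \<in> {a..b}"
    then show "complex_of_real t \<in> S"
      using assms(1,3) by (auto simp: S_def)
    have "\<bar>(t - L) / k\<bar> \<le> 1"
      using arcsin_param_bounded[of k t L] t assms(1,3) \<open>k > 0\<close> by (auto simp: abs_le_iff)
    then have "A (of_real t) = of_real (arcsin_param k L t)"
      by (simp add: A_def arcsin_param_def of_real_arcsin)
    then show "f (arcsin_param k L t) = Re (F (A (of_real t)))"
      using assms(5) by simp
  qed
qed

text \<open>
  While \<open>a\<close> runs from \<open>-\<sigma>\<close> to \<open>2\<pi>/w - \<sigma>\<close> the tangent angle \<open>wa\<close> makes a full turn and the curve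
  moves downwards: the length element \<open>k cos a da\<close> grows with \<open>a \<le> 0\<close>, so the descending
  half-turn outweighs the ascending one.
\<close>

lemma arc_y_after_full_turn:
  fixes k w \<sigma> :: real
  assumes "k > 0" "w > 1" "0 < \<sigma>" "\<sigma> < pi" "2 * pi \<le> w * \<sigma>" "sin (w * \<sigma>) = 0"
  shows "cos (w * \<sigma>) * (arc_y k w (2 * pi / w - \<sigma>) - arc_y k w (- \<sigma>)) < 0"
proof -
  define e where "e = cos (w * \<sigma>)"
  define a where "a = 2 * pi / w - \<sigma>"
  have "e\<^sup>2 = 1"
    using sin_cos_squared_add[of "w * \<sigma>"] assms(6) by (simp add: e_def)
  have a: "- \<sigma> < a" "a \<le> 0"
    using assms(2,5) by (auto simp: a_def field_simps)
  have wa: "w * a = 2 * pi - w * \<sigma>"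
    using assms(2) by (simp add: a_def algebra_simps)
  have "cos ((w + 1) * a) = e * cos a" "cos ((w - 1) * a) = e * cos a"
    "cos ((w + 1) * - \<sigma>) = e * cos \<sigma>" "cos ((w - 1) * - \<sigma>) = e * cos \<sigma>"
    by (simp_all add: distrib_right left_diff_distrib cos_add cos_diff sin_diff wa e_def assms(6))
  then have "e * (arc_y k w a - arc_y k w (- \<sigma>))
      = - (k / 2) * e\<^sup>2 * (cos a - cos \<sigma>) * (1 / (w + 1) + 1 / (w - 1))"
    by (simp add: arc_y_def algebra_simps power2_eq_square add_divide_distrib diff_divide_distrib)
  also have "\<dots> < 0"
  proof -
    have "cos (- \<sigma>) < cos a"
      using a assms(4) by (intro cos_monotone_minus_pi_0) auto
    moreover have "1 / (w + 1) + 1 / (w - 1) > 0"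
      using assms(2) by (simp add: add_pos_pos)
    ultimately show ?thesis
      using \<open>e\<^sup>2 = 1\<close> assms(1) by simp
  qed
  finally show ?thesis
    by (simp add: e_def a_def)
qed

section \<open>Existence: the explicit solution\<close>

locale explicit_solution =
  fixes x0 L :: real
  assumes x0_pos: "0 < x0" and short: "3 * x0 < L"
begin

abbreviation \<sigma> where "\<sigma> \<equiv> sol_sigma x0 L"
abbreviation k where "k \<equiv> sol_k x0 L"

definition \<omega> where "\<omega> = pi / \<sigma>"

lemma L_pos: "0 < L"
  using x0_pos short by linarith

lemma \<sigma>_bounds: "0 < \<sigma>" "\<sigma> < pi / 2"
proof -
  have "x0 / (L + x0) < 1 / 4"
    using x0_pos short by (simp add: field_simps)
  then have "sqrt (x0 / (L + x0)) < sqrt (1 / 4)"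
    by (simp only: real_sqrt_less_iff)
  then have "pi * sqrt (x0 / (L + x0)) < pi * (1 / 2)"
    by (intro mult_strict_left_mono) (auto simp: real_sqrt_divide)
  then show "\<sigma> < pi / 2"
    by (simp add: sol_sigma_def)
  show "0 < \<sigma>"
    using x0_pos L_pos by (simp add: sol_sigma_def)
qed

lemma sin_\<sigma>_bounds: "0 < sin \<sigma>" "sin \<sigma> < 1"
proof -
  show "0 < sin \<sigma>"
    using \<sigma>_bounds by (intro sin_gt_zero) auto
  have "sin \<sigma> < sin (pi / 2)"
    using \<sigma>_bounds by (intro sin_monotone_2pi) auto
  then show "sin \<sigma> < 1"
    by simp
qed

lemma k_sin_\<sigma>: "k * sin \<sigma> = L"
  using sin_\<sigma>_bounds by (simp add: sol_k_def)

lemma L_less_k: "L < k"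
  using sin_\<sigma>_bounds L_pos by (simp add: sol_k_def field_simps)

lemma k_pos: "0 < k"
  using L_less_k L_pos by linarith

lemma \<omega>_\<sigma>: "\<omega> * \<sigma> = pi"
  using \<sigma>_bounds by (simp add: \<omega>_def)

lemma \<omega>_gt_1: "1 < \<omega>"
proof -
  have "pi / (pi / 2) < pi / \<sigma>"
    using \<sigma>_bounds by (intro divide_strict_left_mono) auto
  then show ?thesis
    by (simp add: \<omega>_def)
qed

lemma \<omega>_sq_minus_1: "\<omega>\<^sup>2 - 1 = L / x0"
  using x0_pos L_pos by (simp add: \<omega>_def sol_sigma_def power_divide field_simps)

lemma in_range: "t \<in> {0..2*L} \<Longrightarrow> \<bar>t - L\<bar> < k"
  using L_less_k by auto

lemma arcsin_param_0: "arcsin_param k L 0 = - \<sigma>"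
  and arcsin_param_2L: "arcsin_param k L (2 * L) = \<sigma>"
proof -
  have "(0 - L) / k = - sin \<sigma>" "(2 * L - L) / k = sin \<sigma>"
    using k_sin_\<sigma> k_pos by (auto simp: field_simps)
  then show "arcsin_param k L 0 = - \<sigma>" "arcsin_param k L (2 * L) = \<sigma>"
    using \<sigma>_bounds by (simp_all add: arcsin_param_def arcsin_minus arcsin_sin)
qed

lemma \<omega>_fractions:
  "(pi + \<sigma>) / \<sigma> = \<omega> + 1" "(pi - \<sigma>) / \<sigma> = \<omega> - 1"
  "\<sigma> / (pi + \<sigma>) = 1 / (\<omega> + 1)" "\<sigma> / (pi - \<sigma>) = 1 / (\<omega> - 1)"
proof -
  have "\<sigma> \<noteq> 0" "pi + \<sigma> \<noteq> 0" "pi - \<sigma> \<noteq> 0"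
    using \<sigma>_bounds pi_gt3 by auto
  then show "(pi + \<sigma>) / \<sigma> = \<omega> + 1" "(pi - \<sigma>) / \<sigma> = \<omega> - 1"
    "\<sigma> / (pi + \<sigma>) = 1 / (\<omega> + 1)" "\<sigma> / (pi - \<sigma>) = 1 / (\<omega> - 1)"
    by (simp_all add: \<omega>_def field_simps)
qed

lemma sol_x_eq: "sol_x x0 L t = - arc_x k \<omega> (arcsin_param k L t)"
  unfolding sol_x_def Let_def \<omega>_fractions by (simp add: arc_x_def sol_a_def arcsin_param_def)

lemma sol_y_eq: "sol_y x0 L t = - arc_y k \<omega> (arcsin_param k L t) + pi * x0 / (\<sigma> * tan \<sigma>)"
  unfolding sol_y_def Let_def \<omega>_fractions by (simp add: arc_y_def sol_a_def arcsin_param_def)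

lemma sol_x_reflect: "t \<in> {0..2*L} \<Longrightarrow> sol_x x0 L (2 * L - t) = - sol_x x0 L t"
  using arcsin_param_reflect[OF k_pos less_imp_le[OF in_range]]
  by (simp add: sol_x_eq arc_x_def) (simp add: ring_distribs)

lemma sol_y_reflect: "t \<in> {0..2*L} \<Longrightarrow> sol_y x0 L (2 * L - t) = sol_y x0 L t"
  using arcsin_param_reflect[OF k_pos less_imp_le[OF in_range]]
  by (simp add: sol_y_eq arc_y_def)

lemma \<omega>_shifts: "(\<omega> + 1) * - \<sigma> = - (pi + \<sigma>)" "(\<omega> - 1) * - \<sigma> = - (pi - \<sigma>)"
  using \<omega>_\<sigma> by (simp_all add: algebra_simps)

lemma sol_x_0: "sol_x x0 L 0 = x0"
proof -
  have "sol_x x0 L 0 = k * sin \<sigma> / 2 * (1 / (\<omega> - 1) - 1 / (\<omega> + 1))"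
    using \<omega>_shifts by (simp add: sol_x_eq arcsin_param_0 arc_x_def sin_add sin_diff algebra_simps)
  also have "\<dots> = L / (\<omega>\<^sup>2 - 1)"
    using \<omega>_gt_1 by (simp add: k_sin_\<sigma> field_simps power2_eq_square)
  also have "\<dots> = x0"
    using x0_pos L_pos by (simp add: \<omega>_sq_minus_1)
  finally show ?thesis .
qed

lemma sol_y_0: "sol_y x0 L 0 = 0"
proof -
  have "arc_y k \<omega> (arcsin_param k L 0) = k * cos \<sigma> / 2 * (1 / (\<omega> + 1) + 1 / (\<omega> - 1))"
    using \<omega>_shifts by (simp add: arcsin_param_0 arc_y_def cos_add cos_diff algebra_simps)
  also have "\<dots> = k * sin \<sigma> * (\<omega> * cos \<sigma> / sin \<sigma>) / (\<omega>\<^sup>2 - 1)"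
    using \<omega>_gt_1 sin_\<sigma>_bounds by (simp add: field_simps power2_eq_square)
  also have "\<dots> = x0 * (\<omega> * cos \<sigma> / sin \<sigma>)"
    unfolding k_sin_\<sigma> \<omega>_sq_minus_1 using x0_pos L_pos by simp
  also have "\<dots> = pi * x0 / (\<sigma> * tan \<sigma>)"
    using \<sigma>_bounds sin_\<sigma>_bounds by (simp add: \<omega>_def tan_def field_simps)
  finally show ?thesis
    by (simp add: sol_y_eq)
qed

lemma sol_x_2L: "sol_x x0 L (2 * L) = - x0"
  using sol_x_reflect[of 0] sol_x_0 L_pos by simp

lemma sol_y_2L: "sol_y x0 L (2 * L) = 0"
  using sol_y_reflect[of 0] sol_y_0 L_pos by simp

lemma sol_x_L: "sol_x x0 L L = 0"
  using sol_x_reflect[of L] L_pos by simp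

definition \<theta> where "\<theta> t = \<omega> * arcsin_param k L t + pi"

definition \<kappa> where "\<kappa> t = \<omega> / sqrt (k\<^sup>2 - (t - L)\<^sup>2)"

lemma \<kappa>_pos: "t \<in> {0..2*L} \<Longrightarrow> 0 < \<kappa> t"
  using arcsin_param_radicand_pos[OF in_range] \<omega>_gt_1 by (simp add: \<kappa>_def)

lemma sol_x_DERIV: "t \<in> {0..2*L} \<Longrightarrow> (sol_x x0 L has_real_derivative cos (\<theta> t)) (at t)"
  using DERIV_minus[OF arc_x_arcsin_param_DERIV[OF k_pos in_range]] \<omega>_gt_1
  by (simp add: sol_x_eq[abs_def] \<theta>_def)

lemma sol_y_DERIV:
  assumes "t \<in> {0..2*L}"
  shows "(sol_y x0 L has_real_derivative sin (\<theta> t)) (at t)"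
proof -
  have "((\<lambda>t. - arc_y k \<omega> (arcsin_param k L t) + pi * x0 / (\<sigma> * tan \<sigma>)) has_real_derivative
      - sin (\<omega> * arcsin_param k L t) + 0) (at t)"
    using \<omega>_gt_1 by (intro DERIV_add DERIV_minus arc_y_arcsin_param_DERIV[OF k_pos in_range[OF assms]]
        DERIV_const) auto
  moreover have "sol_y x0 L = (\<lambda>t. - arc_y k \<omega> (arcsin_param k L t) + pi * x0 / (\<sigma> * tan \<sigma>))"
    by (simp add: fun_eq_iff sol_y_eq)
  ultimately show ?thesis
    by (simp add: \<theta>_def)
qed

lemma \<theta>_DERIV:
  assumes "t \<in> {0..2*L}"
  shows "(\<theta> has_real_derivative \<kappa> t) (at t)"
proof -
  have "((\<lambda>t. \<omega> * arcsin_param k L t + pi) has_real_derivative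
      \<omega> * (1 / (k * cos (arcsin_param k L t))) + 0) (at t)"
    by (intro DERIV_add DERIV_cmult arcsin_param_DERIV[OF k_pos in_range[OF assms]] DERIV_const)
  then show ?thesis
    using cos_arcsin_param[OF k_pos less_imp_le[OF in_range[OF assms]]]
    by (simp add: \<theta>_def[abs_def] \<kappa>_def)
qed

lemma sol_tangent_curvature:
  assumes "t \<in> {0..2*L}"
  shows "hderiv 0 (2*L) 1 (sol_x x0 L) t = cos (\<theta> t)" "hderiv 0 (2*L) 1 (sol_y x0 L) t = sin (\<theta> t)"
    and "curvature 0 (2*L) (sol_x x0 L) (sol_y x0 L) t = \<kappa> t"
proof -
  have "0 < 2 * L"
    using L_pos by simp
  moreover have "(sol_x x0 L has_real_derivative cos (\<theta> s)) (at s within {0..2*L})"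
    "(sol_y x0 L has_real_derivative sin (\<theta> s)) (at s within {0..2*L})"
    "(\<theta> has_real_derivative \<kappa> s) (at s within {0..2*L})" if "s \<in> {0..2*L}" for s
    using sol_x_DERIV[OF that] sol_y_DERIV[OF that] \<theta>_DERIV[OF that]
    by (simp_all add: has_field_derivative_at_within)
  ultimately show "hderiv 0 (2*L) 1 (sol_x x0 L) t = cos (\<theta> t)"
    "hderiv 0 (2*L) 1 (sol_y x0 L) t = sin (\<theta> t)"
    "curvature 0 (2*L) (sol_x x0 L) (sol_y x0 L) t = \<kappa> t"
    using curvature_tangent_angle[OF _ assms] by blast+
qed

lemma sol_equation:
  assumes "s \<in> {0..2*L}"
  shows "2 + hderiv 0 (2*L) 2 (\<lambda>t. inverse ((curvature 0 (2*L) (sol_x x0 L) (sol_y x0 L) t)\<^sup>2)) s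
    = 2 * L / (L + x0)"
proof -
  have "inverse ((curvature 0 (2*L) (sol_x x0 L) (sol_y x0 L) t)\<^sup>2) = k\<^sup>2 / \<omega>\<^sup>2 - 1 / \<omega>\<^sup>2 * (t - L)\<^sup>2"
    if "t \<in> {0..2*L}" for t
    unfolding sol_tangent_curvature(3)[OF that] \<kappa>_def
    using arcsin_param_radicand_pos[OF in_range[OF that]] \<omega>_gt_1 by (simp add: power_divide field_simps)
  then have "hderiv 0 (2*L) 2 (\<lambda>t. inverse ((curvature 0 (2*L) (sol_x x0 L) (sol_y x0 L) t)\<^sup>2)) s
      = - 2 * (1 / \<omega>\<^sup>2)"
    using L_pos by (intro hderiv_2_parabola[OF _ assms]) auto
  moreover have "1 / \<omega>\<^sup>2 = x0 / (L + x0)"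
    using \<omega>_sq_minus_1 \<omega>_gt_1 x0_pos L_pos by (simp add: field_simps)
  ultimately show ?thesis
    using x0_pos L_pos by (simp add: field_simps)
qed

lemma smooth_sol_x: "smooth_int 0 (2*L) (sol_x x0 L)"
proof -
  define F where "F z = - (of_real (k / 2) * (sin (of_real (\<omega> + 1) * z) / of_real (\<omega> + 1)
    + sin (of_real (\<omega> - 1) * z) / of_real (\<omega> - 1)))" for z :: complex
  have "F holomorphic_on UNIV"
    unfolding F_def[abs_def] using \<omega>_gt_1 by (intro holomorphic_intros) auto
  moreover have "- arc_x k \<omega> r = Re (F (of_real r))" for r
    unfolding F_def arc_x_def
    by (simp only: of_real_mult[symmetric] sin_of_real of_real_divide[symmetric] of_real_add[symmetric]
        of_real_minus[symmetric] Re_complex_of_real)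
  ultimately have "smooth_int 0 (2*L) (\<lambda>t. - arc_x k \<omega> (arcsin_param k L t))"
    using L_pos L_less_k by (intro smooth_int_compose_arcsin_param) auto
  then show ?thesis
    by (simp add: sol_x_eq[abs_def])
qed

lemma smooth_sol_y: "smooth_int 0 (2*L) (sol_y x0 L)"
proof -
  define c where "c = pi * x0 / (\<sigma> * tan \<sigma>)"
  define F where "F z = of_real (k / 2) * (cos (of_real (\<omega> + 1) * z) / of_real (\<omega> + 1)
    + cos (of_real (\<omega> - 1) * z) / of_real (\<omega> - 1)) + of_real c" for z :: complex
  have "F holomorphic_on UNIV"
    unfolding F_def[abs_def] using \<omega>_gt_1 by (intro holomorphic_intros) auto
  moreover have "- arc_y k \<omega> r + c = Re (F (of_real r))" for r
    unfolding F_def arc_y_def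
    by (simp only: of_real_mult[symmetric] cos_of_real of_real_divide[symmetric] of_real_add[symmetric]
        Re_complex_of_real)
  ultimately have "smooth_int 0 (2*L) (\<lambda>t. - arc_y k \<omega> (arcsin_param k L t) + c)"
    using L_pos L_less_k by (intro smooth_int_compose_arcsin_param[where f="\<lambda>r. - arc_y k \<omega> r + c"]) auto
  then show ?thesis
    by (simp add: sol_y_eq[abs_def] c_def)
qed

lemma \<theta>_less_iff: "s \<in> {0..2*L} \<Longrightarrow> t \<in> {0..2*L} \<Longrightarrow> \<theta> s < \<theta> t \<longleftrightarrow> s < t"
  using arcsin_param_less_iff[OF k_pos less_imp_le[OF in_range] less_imp_le[OF in_range]] \<omega>_gt_1
  by (simp add: \<theta>_def)

text \<open>\<open>x\<close> increases until the tangent is vertical at \<open>t_vert\<close>, then decreases to \<open>x L = 0\<close>.\<close>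

definition t_vert where "t_vert = L - k * sin (\<sigma> / 2)"

lemma t_vert_bounds: "0 < t_vert" "t_vert < L"
proof -
  have "sin (\<sigma> / 2) < sin \<sigma>" "0 < sin (\<sigma> / 2)"
    using \<sigma>_bounds by (auto intro: sin_monotone_2pi sin_gt_zero)
  then have "0 < k * sin (\<sigma> / 2)" "k * sin (\<sigma> / 2) < L"
    using k_pos k_sin_\<sigma> mult_strict_left_mono by fastforce+
  then show "0 < t_vert" "t_vert < L"
    by (auto simp: t_vert_def)
qed

lemma \<theta>_values: "\<theta> 0 = 0" "\<theta> t_vert = pi / 2" "\<theta> L = pi"
proof -
  have "(t_vert - L) / k = - sin (\<sigma> / 2)"
    using k_pos by (simp add: t_vert_def)
  then have "arcsin_param k L t_vert = - (\<sigma> / 2)"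
    using \<sigma>_bounds by (simp add: arcsin_param_def arcsin_minus arcsin_sin)
  moreover have "\<omega> * - (\<sigma> / 2) = - (\<omega> * \<sigma>) / 2" "\<omega> * - \<sigma> = - (\<omega> * \<sigma>)"
    by simp_all
  ultimately show "\<theta> 0 = 0" "\<theta> t_vert = pi / 2" "\<theta> L = pi"
    unfolding \<theta>_def arcsin_param_0 by (simp_all add: \<omega>_\<sigma> arcsin_param_def)
qed

lemma \<theta>_between:
  assumes "u \<in> {0..2*L}" "v \<in> {0..2*L}" "u < t" "t < v"
  shows "\<theta> u < \<theta> t" "\<theta> t < \<theta> v"
  using \<theta>_less_iff assms by auto

lemma sol_y_strict_mono:
  assumes "0 \<le> u" "u < v" "v \<le> L"
  shows "sol_y x0 L u < sol_y x0 L v"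
proof -
  have pos: "0 < sin (\<theta> t)" if "u < t" "t < v" for t
  proof -
    have "0 < \<theta> t" "\<theta> t < pi"
      using \<theta>_between[of 0 L t] \<theta>_values assms that L_pos by auto
    then show ?thesis
      by (rule sin_gt_zero)
  qed
  show ?thesis
    by (rule DERIV_within_pos_imp_less[where a=0 and b=L and f'="\<lambda>t. sin (\<theta> t)"])
      (use pos assms L_pos in \<open>auto intro: has_field_derivative_at_within[OF sol_y_DERIV]\<close>)
qed

lemma sol_y_pos: "t \<in> {0<..<2*L} \<Longrightarrow> 0 < sol_y x0 L t"
  using sol_y_strict_mono[of 0 t] sol_y_strict_mono[of 0 "2 * L - t"] sol_y_reflect[of t] sol_y_0
  by (cases "t \<le> L") auto

lemma sol_x_pos:
  assumes "0 \<le> t" "t < L"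
  shows "0 < sol_x x0 L t"
proof (cases "t \<le> t_vert")
  case True
  have pos: "0 < cos (\<theta> s)" if "0 < s" "s < t" for s
  proof -
    have "0 < \<theta> s" "\<theta> s < pi / 2"
      using \<theta>_between[of 0 t_vert s] \<theta>_values True t_vert_bounds that by auto
    then show ?thesis
      by (intro cos_gt_zero_pi) auto
  qed
  have "sol_x x0 L 0 < sol_x x0 L t" if "0 < t"
    by (rule DERIV_within_pos_imp_less[where a=0 and b=t_vert and f'="\<lambda>t. cos (\<theta> t)"])
      (use pos that True t_vert_bounds in \<open>auto intro: has_field_derivative_at_within[OF sol_x_DERIV]\<close>)
  then show ?thesis
    using assms sol_x_0 x0_pos by (cases "t = 0") auto
next
  case False
  have neg: "cos (\<theta> s) < 0" if "t < s" "s < L" for s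
  proof -
    have "pi / 2 < \<theta> s" "\<theta> s < pi"
      using \<theta>_between[of t_vert L s] \<theta>_values False t_vert_bounds that by auto
    then show ?thesis
      using cos_gt_zero_pi[of "\<theta> s - pi"] by (simp add: cos_diff)
  qed
  have "sol_x x0 L L < sol_x x0 L t"
    by (rule DERIV_within_neg_imp_greater[where a=t_vert and b=L and f'="\<lambda>t. cos (\<theta> t)"])
      (use neg False assms t_vert_bounds in \<open>auto intro: has_field_derivative_at_within[OF sol_x_DERIV]\<close>)
  then show ?thesis
    using sol_x_L by simp
qed

lemma sol_x_nonpos: "L \<le> t \<Longrightarrow> t \<le> 2 * L \<Longrightarrow> sol_x x0 L t \<le> 0"
  using sol_x_pos[of "2 * L - t"] sol_x_reflect[of t] sol_x_L by (cases "t = L") auto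

lemma sol_inj: "inj_on (\<lambda>t. (sol_x x0 L t, sol_y x0 L t)) {0..2*L}"
proof (rule linorder_inj_onI')
  fix s t assume s: "s \<in> {0..2*L}" and t: "t \<in> {0..2*L}" and "s < t"
  consider "t \<le> L" | "L \<le> s" | "s < L" "L \<le> t"
    by linarith
  then show "(sol_x x0 L s, sol_y x0 L s) \<noteq> (sol_x x0 L t, sol_y x0 L t)"
  proof cases
    case 1
    then show ?thesis
      using sol_y_strict_mono[of s t] s \<open>s < t\<close> by auto
  next
    case 2
    then have "sol_y x0 L (2 * L - t) < sol_y x0 L (2 * L - s)"
      using sol_y_strict_mono[of "2 * L - t" "2 * L - s"] t \<open>s < t\<close> by auto
    then show ?thesis
      unfolding sol_y_reflect[OF s] sol_y_reflect[OF t] by auto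
  next
    case 3
    then show ?thesis
      using sol_x_pos[of s] sol_x_nonpos[of t] s t by fastforce
  qed
qed

lemma sol_vert_symmetric: "vert_symmetric 0 (2*L) (sol_x x0 L) (sol_y x0 L)"
  by (rule vert_symmetric_if_reflection) (simp_all add: sol_x_reflect sol_y_reflect)

lemma sol_unit_speed:
  "t \<in> {0..2*L} \<Longrightarrow> (hderiv 0 (2*L) 1 (sol_x x0 L) t)\<^sup>2 + (hderiv 0 (2*L) 1 (sol_y x0 L) t)\<^sup>2 = 1"
  unfolding sol_tangent_curvature by simp

lemma sol_regular:
  "t \<in> {0..2*L} \<Longrightarrow> (hderiv 0 (2*L) 1 (sol_x x0 L) t, hderiv 0 (2*L) 1 (sol_y x0 L) t) \<noteq> (0, 0)"
  using sol_unit_speed by fastforce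

lemma sol_curvature_pos: "t \<in> {0..2*L} \<Longrightarrow> 0 < curvature 0 (2*L) (sol_x x0 L) (sol_y x0 L) t"
  unfolding sol_tangent_curvature by (rule \<kappa>_pos)

lemma sol_horizontal_ends:
  "hderiv 0 (2*L) 1 (sol_y x0 L) 0 = 0" "hderiv 0 (2*L) 1 (sol_y x0 L) (2 * L) = 0"
proof -
  have "hderiv 0 (2*L) 1 (sol_y x0 L) 0 = sin (\<theta> 0)"
    "hderiv 0 (2*L) 1 (sol_y x0 L) (2 * L) = sin (\<theta> (2 * L))"
    using L_pos by (intro sol_tangent_curvature(2); simp)+
  moreover have "\<theta> (2 * L) = 2 * pi"
    using \<omega>_\<sigma> by (simp add: \<theta>_def arcsin_param_2L)
  ultimately show "hderiv 0 (2*L) 1 (sol_y x0 L) 0 = 0" "hderiv 0 (2*L) 1 (sol_y x0 L) (2 * L) = 0"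
    using \<theta>_values(1) by simp_all
qed

theorem sol_solves: "solves x0 L (2 * L / (L + x0)) (sol_x x0 L) (sol_y x0 L)"
  unfolding solves_def admissible_def arclength_param_def
proof (intro conjI ballI)
  show "0 < 2 * L / (L + x0)"
    using x0_pos L_pos by simp
  fix t assume "t \<in> {0..2*L}"
  then show "(hderiv 0 (2*L) 1 (sol_x x0 L) t, hderiv 0 (2*L) 1 (sol_y x0 L) t) \<noteq> (0, 0)"
    "0 < curvature 0 (2*L) (sol_x x0 L) (sol_y x0 L) t"
    "(hderiv 0 (2*L) 1 (sol_x x0 L) t)\<^sup>2 + (hderiv 0 (2*L) 1 (sol_y x0 L) t)\<^sup>2 = 1"
    "2 + hderiv 0 (2*L) 2 (\<lambda>t. inverse ((curvature 0 (2*L) (sol_x x0 L) (sol_y x0 L) t)\<^sup>2)) t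
      = 2 * L / (L + x0)"
    by (fact sol_regular sol_curvature_pos sol_unit_speed sol_equation)+
next
  show "0 < sol_y x0 L t" if "t \<in> {0<..<2*L}" for t
    using that by (rule sol_y_pos)
qed (fact smooth_sol_x smooth_sol_y sol_inj sol_x_0 sol_y_0 sol_x_2L sol_y_2L sol_vert_symmetric
    sol_horizontal_ends)+

end

section \<open>Uniqueness\<close>

locale solution =
  fixes x0 L lam :: real and x y :: "real \<Rightarrow> real"
  assumes x0_pos: "0 < x0" and L_pos: "0 < L" and solves: "solves x0 L lam x y"
begin

abbreviation x' where "x' \<equiv> hderiv 0 (2*L) 1 x"
abbreviation x'' where "x'' \<equiv> hderiv 0 (2*L) 2 x"
abbreviation x''' where "x''' \<equiv> hderiv 0 (2*L) 3 x"
abbreviation y' where "y' \<equiv> hderiv 0 (2*L) 1 y"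
abbreviation y'' where "y'' \<equiv> hderiv 0 (2*L) 2 y"
abbreviation y''' where "y''' \<equiv> hderiv 0 (2*L) 3 y"
abbreviation H where "H \<equiv> curvature 0 (2*L) x y"

lemma smooth: "smooth_int 0 (2*L) x" "smooth_int 0 (2*L) y"
  using solves unfolding solves_def admissible_def by blast+

lemma boundary: "x 0 = x0" "y 0 = 0" "x (2 * L) = - x0" "y (2 * L) = 0"
  using solves unfolding solves_def admissible_def by blast+

lemma y_pos: "t \<in> {0<..<2*L} \<Longrightarrow> 0 < y t"
  using solves unfolding solves_def admissible_def by blast

lemma equation: "t \<in> {0..2*L} \<Longrightarrow> 2 + hderiv 0 (2*L) 2 (\<lambda>t. inverse ((H t)\<^sup>2)) t = lam"
  using solves unfolding solves_def by blast

lemma DERIV_x: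
  assumes "t \<in> {0..2*L}"
  shows "(x has_real_derivative x' t) (at t within {0..2*L})"
    "(x' has_real_derivative x'' t) (at t within {0..2*L})"
    "(x'' has_real_derivative x''' t) (at t within {0..2*L})"
    "(x''' has_real_derivative hderiv 0 (2*L) 4 x t) (at t within {0..2*L})"
  using smooth_int_DERIV[OF smooth(1) assms, of 0] smooth_int_DERIV[OF smooth(1) assms, of 1]
    smooth_int_DERIV[OF smooth(1) assms, of 2] smooth_int_DERIV[OF smooth(1) assms, of 3]
  by (simp_all add: eval_nat_numeral)

lemma DERIV_y:
  assumes "t \<in> {0..2*L}"
  shows "(y has_real_derivative y' t) (at t within {0..2*L})"
    "(y' has_real_derivative y'' t) (at t within {0..2*L})"
    "(y'' has_real_derivative y''' t) (at t within {0..2*L})"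
    "(y''' has_real_derivative hderiv 0 (2*L) 4 y t) (at t within {0..2*L})"
  using smooth_int_DERIV[OF smooth(2) assms, of 0] smooth_int_DERIV[OF smooth(2) assms, of 1]
    smooth_int_DERIV[OF smooth(2) assms, of 2] smooth_int_DERIV[OF smooth(2) assms, of 3]
  by (simp_all add: eval_nat_numeral)

lemma unit_speed: "t \<in> {0..2*L} \<Longrightarrow> (x' t)\<^sup>2 + (y' t)\<^sup>2 = 1"
  using solves unfolding solves_def arclength_param_def by blast

lemma H_eq: "t \<in> {0..2*L} \<Longrightarrow> H t = x' t * y'' t - y' t * x'' t"
  using unit_speed by (simp add: curvature_def)

lemma H_pos: "t \<in> {0..2*L} \<Longrightarrow> 0 < H t"
  using solves unfolding solves_def admissible_def by blast

lemma frenet: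
  assumes "t \<in> {0..2*L}"
  shows "x'' t = - H t * y' t" "y'' t = H t * x' t"
proof -
  have "((\<lambda>t. (x' t)\<^sup>2 + (y' t)\<^sup>2) has_real_derivative 2 * (x' t * x'' t + y' t * y'' t))
      (at t within {0..2*L})"
    using DERIV_x(2)[OF assms] DERIV_y(2)[OF assms]
    by (auto intro!: derivative_eq_intros simp: algebra_simps)
  from DERIV_within_const_on_zero[OF _ assms this unit_speed] L_pos
  have normal: "x' t * x'' t + y' t * y'' t = 0"
    by simp
  have "x'' t + H t * y' t = x'' t * (1 - ((x' t)\<^sup>2 + (y' t)\<^sup>2)) + x' t * (x' t * x'' t + y' t * y'' t)"
    "y'' t - H t * x' t = y'' t * (1 - ((x' t)\<^sup>2 + (y' t)\<^sup>2)) + y' t * (x' t * x'' t + y' t * y'' t)"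
    unfolding H_eq[OF assms] by (simp_all add: algebra_simps power2_eq_square)
  then show "x'' t = - H t * y' t" "y'' t = H t * x' t"
    using unit_speed[OF assms] normal by simp_all
qed

definition H' where "H' t = x' t * y''' t - y' t * x''' t"

definition \<rho> where "\<rho> t = inverse (H t)"

text \<open>\<open>Q = \<rho>\<rho>'\<close> is half the derivative of \<open>\<rho>\<^sup>2 = H\<^sup>-\<^sup>2\<close>.\<close>

definition Q where "Q t = - H' t / (H t) ^ 3"

lemma H_DERIV:
  assumes "t \<in> {0..2*L}"
  shows "(H has_real_derivative H' t) (at t within {0..2*L})"
proof (rule DERIV_within_cong_on[OF assms H_eq])
  show "((\<lambda>t. x' t * y'' t - y' t * x'' t) has_real_derivative H' t) (at t within {0..2*L})"
    unfolding H'_def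
    by (rule DERIV_cong, (rule derivative_intros DERIV_x[OF assms] DERIV_y[OF assms])+)
      (simp add: algebra_simps)
qed

lemma \<rho>_DERIV:
  assumes "t \<in> {0..2*L}"
  shows "(\<rho> has_real_derivative - H' t / (H t)\<^sup>2) (at t within {0..2*L})"
  unfolding \<rho>_def[abs_def]
  by (rule DERIV_cong[OF DERIV_inverse_fun[OF H_DERIV[OF assms]]])
    (use H_pos[OF assms] in \<open>simp_all add: divide_inverse eval_nat_numeral\<close>)

lemma \<rho>_sq_DERIV:
  assumes "t \<in> {0..2*L}"
  shows "((\<lambda>t. (\<rho> t)\<^sup>2) has_real_derivative 2 * Q t) (at t within {0..2*L})"
  by (rule DERIV_cong[OF DERIV_power[OF \<rho>_DERIV[OF assms], of 2]])
    (use H_pos[OF assms] in \<open>simp add: Q_def \<rho>_def field_simps power2_eq_square power3_eq_cube\<close>)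

lemma Q_DERIV:
  assumes "t \<in> {0..2*L}"
  shows "(Q has_real_derivative (lam - 2) / 2) (at t within {0..2*L})"
proof -
  have "0 < 2 * L"
    using L_pos by simp
  \<comment> \<open>\<open>hderiv\<close> only carries information about differentiable functions, so we first need
    that \<open>Q\<close> is differentiable; this is where the fourth derivatives of \<open>x\<close> and \<open>y\<close> enter.\<close>
  have "\<exists>D. (H' has_real_derivative D) (at t within {0..2*L})"
    unfolding H'_def[abs_def] by (rule exI, (rule derivative_intros DERIV_x[OF assms] DERIV_y[OF assms])+)
  then obtain D' where D': "(H' has_real_derivative D') (at t within {0..2*L})"
    by blast
  from DERIV_minus[OF DERIV_divide[OF D' DERIV_power[OF H_DERIV[OF assms], of 3]]] H_pos[OF assms]
  obtain D where D: "(Q has_real_derivative D) (at t within {0..2*L})"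
    unfolding Q_def[abs_def] by auto
  have first: "hderiv 0 (2*L) 1 (\<lambda>t. inverse ((H t)\<^sup>2)) s = 2 * Q s" if "s \<in> {0..2*L}" for s
    unfolding hderiv_1 using \<open>0 < 2 * L\<close> that \<rho>_sq_DERIV[OF that]
    by (intro dwithin_eqI) (auto simp: \<rho>_def power_inverse)
  have "hderiv 0 (2*L) 2 (\<lambda>t. inverse ((H t)\<^sup>2)) t = 2 * D"
    unfolding hderiv_2 by (rule dwithin_eqI[OF \<open>0 < 2 * L\<close> assms first DERIV_cmult[OF D]])
  moreover have "2 + hderiv 0 (2*L) 2 (\<lambda>t. inverse ((H t)\<^sup>2)) t = lam"
    using equation[OF assms] .
  ultimately have "D = (lam - 2) / 2"
    by simp
  with D show ?thesis
    by simp
qed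

lemma first_integrals:
  assumes "t \<in> {0..2*L}"
  shows "((\<lambda>t. y' t * Q t - x' t * \<rho> t) has_real_derivative lam / 2 * y' t) (at t within {0..2*L})"
    and "((\<lambda>t. y' t * \<rho> t + x' t * Q t) has_real_derivative lam / 2 * x' t) (at t within {0..2*L})"
proof -
  have Hne: "H t \<noteq> 0"
    using H_pos[OF assms] by simp
  show "((\<lambda>t. y' t * Q t - x' t * \<rho> t) has_real_derivative lam / 2 * y' t) (at t within {0..2*L})"
    by (rule DERIV_cong, (rule derivative_intros DERIV_x(2)[OF assms] DERIV_y(2)[OF assms]
          \<rho>_DERIV[OF assms] Q_DERIV[OF assms])+)
      (simp only: frenet[OF assms] Q_def \<rho>_def, simp add: Hne divide_simps power2_eq_square power3_eq_cube,
        algebra)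
  show "((\<lambda>t. y' t * \<rho> t + x' t * Q t) has_real_derivative lam / 2 * x' t) (at t within {0..2*L})"
    by (rule DERIV_cong, (rule derivative_intros DERIV_x(2)[OF assms] DERIV_y(2)[OF assms]
          \<rho>_DERIV[OF assms] Q_DERIV[OF assms])+)
      (simp only: frenet[OF assms] Q_def \<rho>_def, simp add: Hne divide_simps power2_eq_square power3_eq_cube,
        algebra)
qed

lemma tangent_at_ends: "x' 0 = 1" "y' 0 = 0" "x' (2 * L) = 1" "y' (2 * L) = 0"
proof -
  have ends: "0 \<in> {0..2*L}" "2 * L \<in> {0..2*L}" "0 < 2 * L"
    using L_pos by auto
  note y = boundary(2,4) y_pos
  show y': "y' 0 = 0" "y' (2 * L) = 0"
    using solves unfolding solves_def by blast+
  have "x' 0 = 1 \<or> x' 0 = -1" "x' (2 * L) = 1 \<or> x' (2 * L) = -1"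
    using unit_speed[OF ends(1)] unit_speed[OF ends(2)] y' by (simp_all add: power2_eq_1_iff)
  moreover have False if "x' 0 = -1"
  proof -
    have "(y' has_real_derivative - H 0) (at 0 within {0..2*L})"
      using DERIV_y(2)[OF ends(1)] frenet(2)[OF ends(1)] that by simp
    from negative_near_left_endpoint[OF ends(3) DERIV_y(1) this] H_pos[OF ends(1)] y y'
    show False
      by fastforce
  qed
  moreover have False if "x' (2 * L) = -1"
  proof -
    have "(y' has_real_derivative - H (2 * L)) (at (2 * L) within {0..2*L})"
      using DERIV_y(2)[OF ends(2)] frenet(2)[OF ends(2)] that by simp
    from negative_near_right_endpoint[OF ends(3) DERIV_y(1) this] H_pos[OF ends(2)] y y'
    show False
      by fastforce
  qed
  ultimately show "x' 0 = 1" "x' (2 * L) = 1"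
    by blast+
qed

lemma \<rho>_at_ends: "\<rho> (2 * L) = \<rho> 0"
proof -
  have "((\<lambda>t. lam / 2 * y t) has_real_derivative lam / 2 * y' t) (at t within {0..2*L})"
    if "t \<in> {0..2*L}" for t
    using DERIV_y(1)[OF that] by (rule DERIV_cmult)
  from DERIV_within_diff_const[OF first_integrals(1) this, of "2 * L" 0] L_pos
  show ?thesis
    using tangent_at_ends boundary by simp
qed

lemma lam_eq: "lam = 2 * L / (L + x0)"
proof -
  have I: "0 \<in> {0..2*L}" "2 * L \<in> {0..2*L}"
    using L_pos by auto
  have "((\<lambda>t. lam / 2 * x t) has_real_derivative lam / 2 * x' t) (at t within {0..2*L})"
    if "t \<in> {0..2*L}" for t
    using DERIV_x(1)[OF that] by (rule DERIV_cmult)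
  from DERIV_within_diff_const[OF first_integrals(2) this I(2,1)]
  have "Q (2 * L) - Q 0 = - lam * x0"
    using tangent_at_ends boundary by (simp add: algebra_simps)
  moreover have "((\<lambda>t. (lam - 2) / 2 * t) has_real_derivative (lam - 2) / 2) (at t within {0..2*L})" for t
    by (auto intro!: derivative_eq_intros)
  from DERIV_within_diff_const[OF Q_DERIV this I(2,1)]
  have "Q (2 * L) - Q 0 = (lam - 2) * L"
    by simp
  ultimately have "lam * (L + x0) = 2 * L"
    by (simp add: algebra_simps)
  then show ?thesis
    using x0_pos L_pos by (simp add: field_simps)
qed

text \<open>
  The constants \<open>c\<close>, \<open>k\<close>, \<open>\<omega>\<close>, \<open>\<sigma>\<close> below are read off the solution; the proof of \<open>unique\<close>
  identifies \<open>k\<close>, \<open>\<omega>\<close>, \<open>\<sigma>\<close> with those of \<open>explicit_solution\<close>.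
\<close>

definition c where "c = x0 / (L + x0)"

lemma c_bounds: "0 < c" "c < 1"
  using x0_pos L_pos by (simp_all add: c_def field_simps)

lemma Q_linear: "t \<in> {0..2*L} \<Longrightarrow> Q t = Q 0 - c * t"
proof -
  assume t: "t \<in> {0..2*L}"
  have "(lam - 2) / 2 = - c"
    using x0_pos L_pos by (simp add: lam_eq c_def field_simps)
  then have "((\<lambda>t. - c * t) has_real_derivative (lam - 2) / 2) (at s within {0..2*L})" for s
    by (auto intro!: derivative_eq_intros)
  from DERIV_within_diff_const[OF Q_DERIV this t, of 0] L_pos
  show ?thesis
    by simp
qed

lemma \<rho>_sq_quadratic: "t \<in> {0..2*L} \<Longrightarrow> (\<rho> t)\<^sup>2 = (\<rho> 0)\<^sup>2 + 2 * Q 0 * t - c * t\<^sup>2"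
proof -
  assume t: "t \<in> {0..2*L}"
  have "((\<lambda>t. 2 * Q 0 * t - c * t\<^sup>2) has_real_derivative 2 * Q s) (at s within {0..2*L})"
    if "s \<in> {0..2*L}" for s
    using Q_linear[OF that] by (auto intro!: derivative_eq_intros)
  from DERIV_within_diff_const[OF \<rho>_sq_DERIV this t, of 0] L_pos
  show ?thesis
    by simp
qed

lemma Q_0: "Q 0 = c * L"
proof -
  have "(\<rho> (2 * L))\<^sup>2 = (\<rho> 0)\<^sup>2 + 2 * Q 0 * (2 * L) - c * (2 * L)\<^sup>2"
    using L_pos by (intro \<rho>_sq_quadratic) simp
  then have "4 * L * (Q 0 - c * L) = 0"
    unfolding \<rho>_at_ends by (auto simp: algebra_simps power2_eq_square)
  then show ?thesis
    using L_pos by simp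
qed

definition k where "k = sqrt ((\<rho> 0)\<^sup>2 / c + L\<^sup>2)"

lemma k_sq: "k\<^sup>2 = (\<rho> 0)\<^sup>2 / c + L\<^sup>2"
  using c_bounds by (simp add: k_def)

lemma L_less_k: "L < k"
proof -
  have "0 < \<rho> 0"
    using H_pos[of 0] L_pos by (simp add: \<rho>_def)
  then have "L\<^sup>2 < k\<^sup>2"
    using c_bounds by (simp add: k_sq)
  moreover have "0 \<le> k"
    using c_bounds by (auto simp: k_def intro!: add_nonneg_nonneg divide_nonneg_pos)
  ultimately show ?thesis
    by (rule power_less_imp_less_base)
qed

lemma k_pos: "0 < k"
  using L_less_k L_pos by linarith

lemma in_range: "t \<in> {0..2*L} \<Longrightarrow> \<bar>t - L\<bar> < k"
  using L_less_k by auto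

lemma \<rho>_eq: "t \<in> {0..2*L} \<Longrightarrow> \<rho> t = sqrt c * sqrt (k\<^sup>2 - (t - L)\<^sup>2)"
proof -
  assume t: "t \<in> {0..2*L}"
  have "(\<rho> t)\<^sup>2 = c * (k\<^sup>2 - (t - L)\<^sup>2)"
    unfolding \<rho>_sq_quadratic[OF t] Q_0 k_sq using c_bounds by (simp add: field_simps power2_eq_square)
  moreover have "0 < \<rho> t"
    using H_pos[OF t] by (simp add: \<rho>_def)
  ultimately have "\<rho> t = sqrt (c * (k\<^sup>2 - (t - L)\<^sup>2))"
    by (metis abs_of_pos real_sqrt_abs)
  then show ?thesis
    by (simp add: real_sqrt_mult)
qed

definition \<omega> where "\<omega> = 1 / sqrt c"

lemma \<omega>_gt_1: "1 < \<omega>"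
  using c_bounds by (simp add: \<omega>_def)

lemma H_explicit: "t \<in> {0..2*L} \<Longrightarrow> H t = \<omega> / sqrt (k\<^sup>2 - (t - L)\<^sup>2)"
proof -
  assume t: "t \<in> {0..2*L}"
  have "H t = inverse (\<rho> t)"
    by (simp add: \<rho>_def)
  also have "\<dots> = \<omega> / sqrt (k\<^sup>2 - (t - L)\<^sup>2)"
    unfolding \<rho>_eq[OF t] \<omega>_def using c_bounds arcsin_param_radicand_pos[OF in_range[OF t]] by (simp add: field_simps)
  finally show ?thesis .
qed

definition \<phi> where "\<phi> t = \<omega> * arcsin_param k L t"

lemma \<phi>_DERIV: "t \<in> {0..2*L} \<Longrightarrow> (\<phi> has_real_derivative H t) (at t within {0..2*L})"
proof -
  assume t: "t \<in> {0..2*L}"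
  have "(\<phi> has_real_derivative \<omega> * (1 / (k * cos (arcsin_param k L t)))) (at t)"
    unfolding \<phi>_def[abs_def] by (rule DERIV_cmult[OF arcsin_param_DERIV[OF k_pos in_range[OF t]]])
  then show ?thesis
    using cos_arcsin_param[OF k_pos less_imp_le[OF in_range[OF t]]]
    by (simp add: H_explicit[OF t] has_field_derivative_at_within)
qed

definition \<sigma> where "\<sigma> = arcsin (L / k)"

lemma \<sigma>_bounds: "0 < \<sigma>" "\<sigma> < pi / 2" "sin \<sigma> = L / k"
proof -
  have "0 < L / k" "L / k < 1"
    using L_pos L_less_k by simp_all
  then show "0 < \<sigma>" "\<sigma> < pi / 2" "sin \<sigma> = L / k"
    using arcsin_less_arcsin[of 0 "L / k"] arcsin_lt_bounded[of "L / k"] by (auto simp: \<sigma>_def)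
qed

lemma arcsin_param_ends: "arcsin_param k L 0 = - \<sigma>" "arcsin_param k L (2 * L) = \<sigma>"
proof -
  have "0 < L / k" "L / k < 1"
    using L_pos L_less_k by simp_all
  then have "-1 \<le> L / k" "L / k \<le> 1"
    by simp_all
  then show "arcsin_param k L 0 = - \<sigma>" "arcsin_param k L (2 * L) = \<sigma>"
    by (simp_all add: arcsin_param_def \<sigma>_def arcsin_minus)
qed

lemma tangent_angle:
  assumes "t \<in> {0..2*L}"
  shows "x' t = cos (\<phi> t + \<omega> * \<sigma>)" "y' t = sin (\<phi> t + \<omega> * \<sigma>)"
proof -
  have "(x' has_real_derivative - H s * y' s) (at s within {0..2*L})"
    "(y' has_real_derivative H s * x' s) (at s within {0..2*L})" if "s \<in> {0..2*L}" for s
    using DERIV_x(2)[OF that] DERIV_y(2)[OF that] frenet[OF that] by simp_all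
  note rotation = tangent_rotation[of 0 "2*L" x' H y' \<phi>, OF this \<phi>_DERIV assms]
  have shift: "\<phi> t - \<phi> 0 = \<phi> t + \<omega> * \<sigma>"
    by (simp add: \<phi>_def arcsin_param_ends)
  show "x' t = cos (\<phi> t + \<omega> * \<sigma>)" "y' t = sin (\<phi> t + \<omega> * \<sigma>)"
    using rotation[unfolded shift] tangent_at_ends by simp_all
qed

lemma sin_\<omega>\<sigma>: "sin (\<omega> * \<sigma>) = 0"
proof -
  have "x' (2 * L) = cos (\<phi> (2 * L) + \<omega> * \<sigma>)"
    using L_pos by (intro tangent_angle) simp
  moreover have "\<phi> (2 * L) = \<omega> * \<sigma>"
    by (simp add: \<phi>_def arcsin_param_ends)
  ultimately have "cos (2 * (\<omega> * \<sigma>)) = 1"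
    using tangent_at_ends by (simp add: mult_2[symmetric])
  then show ?thesis
    by (simp add: cos_double_sin)
qed

lemma tangent_explicit:
  assumes "t \<in> {0..2*L}"
  shows "x' t = cos (\<omega> * \<sigma>) * cos (\<phi> t)" "y' t = cos (\<omega> * \<sigma>) * sin (\<phi> t)"
  using tangent_angle[OF assms] sin_\<omega>\<sigma> by (simp_all add: cos_add sin_add)

lemma y_explicit:
  assumes "t \<in> {0..2*L}"
  shows "y t = cos (\<omega> * \<sigma>) * (arc_y k \<omega> (arcsin_param k L t) - arc_y k \<omega> (- \<sigma>))"
proof -
  have "((\<lambda>t. cos (\<omega> * \<sigma>) * arc_y k \<omega> (arcsin_param k L t)) has_real_derivative y' s)
      (at s within {0..2*L})" if "s \<in> {0..2*L}" for s
    using DERIV_cmult[OF arc_y_arcsin_param_DERIV[OF k_pos in_range[OF that]], of \<omega> "cos (\<omega> * \<sigma>)"]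
      \<omega>_gt_1 tangent_explicit(2)[OF that]
    by (simp add: \<phi>_def has_field_derivative_at_within)
  from DERIV_within_diff_const[OF DERIV_y(1) this assms, of 0] L_pos
  show ?thesis
    using boundary by (simp add: arcsin_param_ends algebra_simps)
qed

lemma \<omega>\<sigma>_less: "\<omega> * \<sigma> < 2 * pi"
proof (rule ccontr)
  assume "\<not> \<omega> * \<sigma> < 2 * pi"
  then have turn: "2 * pi \<le> \<omega> * \<sigma>"
    by simp
  define a where "a = 2 * pi / \<omega> - \<sigma>"
  have a: "- \<sigma> < a" "a \<le> 0"
    using turn \<omega>_gt_1 by (auto simp: a_def field_simps)
  define t where "t = L + k * sin a" \<comment> \<open>where the tangent has made a full turn\<close>
  have "sin (- \<sigma>) < sin a"
    using a \<sigma>_bounds by (intro sin_monotone_2pi) auto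
  have "sin a \<le> sin 0"
    using a \<sigma>_bounds by (intro sin_monotone_2pi_le) auto
  then have "- (L / k) < sin a" "sin a \<le> 0"
    using \<open>sin (- \<sigma>) < sin a\<close> \<sigma>_bounds(3) by simp_all
  then have "- L < k * sin a" "k * sin a \<le> 0"
    using k_pos mult_strict_left_mono[of "- (L / k)" "sin a" k] by (auto simp: mult_nonneg_nonpos)
  then have "t \<in> {0<..<2*L}"
    using L_pos by (simp add: t_def)
  moreover have "arcsin_param k L t = a"
    using a \<sigma>_bounds k_pos by (simp add: arcsin_param_def t_def arcsin_sin)
  moreover have "\<sigma> < pi"
    using \<sigma>_bounds by simp
  ultimately have "y t < 0"
    using y_explicit[of t] arc_y_after_full_turn[OF k_pos \<omega>_gt_1 \<sigma>_bounds(1) _ turn sin_\<omega>\<sigma>]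
    by (simp add: a_def)
  moreover have "0 < y t"
    using y_pos \<open>t \<in> {0<..<2*L}\<close> by blast
  ultimately show False
    by simp
qed

lemma \<omega>\<sigma>_eq_pi: "\<omega> * \<sigma> = pi"
proof -
  obtain n :: int where n: "\<omega> * \<sigma> = of_int n * pi"
    using sin_\<omega>\<sigma> sin_zero_iff_int2 by blast
  have "0 < \<omega> * \<sigma>"
    using \<omega>_gt_1 \<sigma>_bounds by simp
  then have "0 < of_int n * pi" "of_int n * pi < 2 * pi"
    using n \<omega>\<sigma>_less by simp_all
  then have "n = 1"
    by (simp add: zero_less_mult_iff)
  then show ?thesis
    using n by simp
qed

lemma \<sigma>_eq: "\<sigma> = pi * sqrt c"
proof -
  have "0 < sqrt c"
    using c_bounds by simp
  then show ?thesis
    using \<omega>\<sigma>_eq_pi by (simp add: \<omega>_def field_simps)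
qed

lemma short: "3 * x0 < L"
proof -
  have "sqrt c < sqrt (1 / 4)"
    using \<sigma>_bounds(2) by (simp add: \<sigma>_eq real_sqrt_divide)
  then have "c < 1 / 4"
    by simp
  then show ?thesis
    using x0_pos L_pos by (simp add: c_def field_simps)
qed

theorem unique: "lam = 2 * L / (L + x0) \<and> (\<forall>s\<in>{0..2*L}. x s = sol_x x0 L s \<and> y s = sol_y x0 L s)"
proof -
  interpret e: explicit_solution x0 L
    using x0_pos short by unfold_locales
  have "sol_sigma x0 L = \<sigma>"
    by (simp add: sol_sigma_def \<sigma>_eq c_def)
  moreover have "L / (L / k) = k"
    using L_pos k_pos by simp
  ultimately have "sol_k x0 L = k" "e.\<omega> = \<omega>"
    using \<sigma>_bounds(1,3) \<omega>\<sigma>_eq_pi by (simp_all add: sol_k_def e.\<omega>_def field_simps)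
  then have \<theta>: "e.\<theta> t = \<phi> t + pi" for t
    by (simp add: e.\<theta>_def \<phi>_def)
  have "cos (\<omega> * \<sigma>) = -1"
    by (simp add: \<omega>\<sigma>_eq_pi)
  then have "(sol_x x0 L has_real_derivative x' t) (at t within {0..2*L})"
    "(sol_y x0 L has_real_derivative y' t) (at t within {0..2*L})" if "t \<in> {0..2*L}" for t
    using e.sol_x_DERIV[OF that] e.sol_y_DERIV[OF that] tangent_explicit[OF that]
    by (simp_all add: \<theta> has_field_derivative_at_within)
  then have "x s - sol_x x0 L s = x 0 - sol_x x0 L 0" "y s - sol_y x0 L s = y 0 - sol_y x0 L 0"
    if "s \<in> {0..2*L}" for s
    using DERIV_within_diff_const[OF DERIV_x(1), of "sol_x x0 L" s 0]
      DERIV_within_diff_const[OF DERIV_y(1), of "sol_y x0 L" s 0] that L_pos by auto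
  then show ?thesis
    using lam_eq boundary e.sol_x_0 e.sol_y_0 by auto
qed

end

theorem mainTheorem6:
  fixes x0 L :: real
  assumes "x0 > 0" and "L > 0"
  shows "((\<exists>lam x y. solves x0 L lam x y \<and>
            (\<forall>lam' x' y'. solves x0 L lam' x' y' \<longrightarrow>
               lam' = lam \<and> (\<forall>s\<in>{0..2*L}. x' s = x s \<and> y' s = y s)))
         \<longleftrightarrow> 3 * x0 < L) \<and>
         (3 * x0 < L \<longrightarrow>
         solves x0 L (2 * L / (L + x0)) (sol_x x0 L) (sol_y x0 L) \<and>
         (\<forall>lam x y. solves x0 L lam x y \<longrightarrow>
            lam = 2 * L / (L + x0) \<and>
            (\<forall>s\<in>{0..2*L}. x s = sol_x x0 L s \<and> y s = sol_y x0 L s)))"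
proof -
  have uniqueness: "3 * x0 < L \<and> lam = 2 * L / (L + x0) \<and>
      (\<forall>s\<in>{0..2*L}. x s = sol_x x0 L s \<and> y s = sol_y x0 L s)"
    if "solves x0 L lam x y" for lam x y
  proof -
    interpret solution x0 L lam x y
      using assms that by unfold_locales
    show ?thesis
      using short unique by blast
  qed
  have existence: "solves x0 L (2 * L / (L + x0)) (sol_x x0 L) (sol_y x0 L)" if "3 * x0 < L"
  proof -
    interpret explicit_solution x0 L
      using assms that by unfold_locales
    show ?thesis
      by (rule sol_solves)
  qed
  show ?thesis
    by (intro conjI impI iffI; use uniqueness existence in blast)
qed

end
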